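(* Let $0<s<\tfrac12$ and $\gamma_1(s)=\frac{1}{2}\left(\frac{2^{1-2s}-1}{1-2^{-2s}}\right)$. For every $h\in\mathcal{H}$: (a) $\operatorname{Var}|h|^2=\tfrac{1}{12}|I(h)|^2$; (b) $\mathcal{Q}^\delta_s(h)=\gamma_1(s)\,|I(h)|^{2s}$.
   Context: Let $\mathbb{R}^+=(0,\infty)$. Dyadic intervals. $\mathcal{D}$ is the family of dyadic intervals $I^j_k=(k2^{-j},(k+1)2^{-j}]$ with $j\in\mathbb{Z}$ and $k$ a nonnegative integer. Dyadic distance. $\delta(x,y)=\inf\{|I|:I\in\mathcal{D},\ x,y\in I\}$ for $x,y\in\mathbb{R}^+$. Haar system. $\mathcal{H}$ consists of the functions $h_I(x)=2^{j/2}h(2^jx-k)$ for $I=I^j_k\in\mathcal{D}$, where $h=\chi_{(0,1/2]}-\chi_{(1/2,1]}$. For $h=h_I$ write $I(h)=I$. Variance. For $f\ge0$ on $\mathbb{R}$, $\operatorname{Var}f=\inf_{a\in\mathbb{R}}\int_{\mathbb{R}}(x-a)^2f(x)\,dx$. Here $|h|^2$ is extended by zero outside $\mathbb{R}^+$. Position form. $\mathcal{Q}^\delta_s(\varphi)=\iint_{(\mathbb{R}^+)^2}\delta(x,y)^{2s}\varphi(x)\overline{\varphi(y)}\,\frac{dx\,dy}{\delta(x,y)}$. *)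

theory Defs
  imports "HOL-Analysis.Analysis"
begin

definition dyadic_interval :: "int \<Rightarrow> nat \<Rightarrow> real set" where
  "dyadic_interval j k = {real k * 2 powr (- real_of_int j) <.. (real k + 1) * 2 powr (- real_of_int j)}"

definition dyadic_intervals :: "real set set" where
  "dyadic_intervals = {dyadic_interval j k | j k. True}"

definition ilen :: "real set \<Rightarrow> real" where
  "ilen I = measure lborel I"

definition dyadic_dist :: "real \<Rightarrow> real \<Rightarrow> real" where
  "dyadic_dist x y = Inf {ilen I | I. I \<in> dyadic_intervals \<and> x \<in> I \<and> y \<in> I}"

definition haar_mother :: "real \<Rightarrow> real" where
  "haar_mother t = indicator {0<..1/2} t - indicator {1/2<..1} t"

definition haar :: "int \<Rightarrow> nat \<Rightarrow> real \<Rightarrow> real" where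
  "haar j k x = 2 powr (real_of_int j / 2) * haar_mother (2 powr real_of_int j * x - real k)"

definition Var :: "(real \<Rightarrow> real) \<Rightarrow> real" where
  "Var f = (INF a\<in>(UNIV::real set). integral\<^sup>L lborel (\<lambda>x. (x - a)\<^sup>2 * f x))"

text \<open>Position form Q^delta_s (for real-valued phi; conjugation is trivial).\<close>
definition Qdelta :: "real \<Rightarrow> (real \<Rightarrow> real) \<Rightarrow> real" where
  "Qdelta s \<phi> = integral\<^sup>L (lborel \<Otimes>\<^sub>M lborel)
     (\<lambda>(x, y). indicator ({0<..} \<times> {0<..}) (x, y) *
        (dyadic_dist x y powr (2 * s) * \<phi> x * \<phi> y / dyadic_dist x y))"

definition gamma1 :: "real \<Rightarrow> real" where
  "gamma1 s = 1/2 * ((2 powr (1 - 2 * s) - 1) / (1 - 2 powr (- 2 * s)))"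

end

theory Submission
  imports Defs
begin

text \<open>
  Both parts rest on |h|^2 = chi_I / |I| for I = I(h), so (a) is the variance of the uniform
  distribution on I, attained at its midpoint. For (b), sort the pairs of distinct points of I
  by the level j + n of the smallest dyadic interval containing both. Such a pair has
  delta(x,y) = |I| 2^-n, while h(x) h(y) = -1/|I| for n = 0 (the points lie in different halves
  of I) and 1/|I| for n >= 1; the pairs of level j + n have measure |I|^2 2^(-n-1). The form is
  therefore the geometric series |I|^(2s) / 2 * (-1 + sum_{n>=1} 2^(-2sn)) = gamma_1(s) |I|^(2s).
\<close>

definition dyadic_index :: "int \<Rightarrow> real \<Rightarrow> int" where
  "dyadic_index a x = \<lceil>x * 2 powr real_of_int a\<rceil>"

lemma ceiling_of_int_ceiling_divide:
  fixes t :: real and N :: int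
  assumes "N > 0"
  shows "\<lceil>real_of_int \<lceil>t\<rceil> / real_of_int N\<rceil> = \<lceil>t / real_of_int N\<rceil>"
proof -
  have "\<lceil>t / real_of_int N\<rceil> = - (\<lfloor>-t\<rfloor> div N)"
    using assms floor_divide_real_eq_div[of N "-t"] by (simp add: ceiling_def)
  moreover have "\<lceil>real_of_int \<lceil>t\<rceil> / real_of_int N\<rceil> = - ((- \<lceil>t\<rceil>) div N)"
    by (rule ceiling_divide_eq_div)
  ultimately show ?thesis by (simp add: ceiling_def)
qed

lemma dyadic_index_coarsen:
  assumes "a \<le> b"
  shows "dyadic_index a x = \<lceil>real_of_int (dyadic_index b x) / 2 ^ nat (b - a)\<rceil>"
proof -
  have N: "(2::real) ^ nat (b - a) = real_of_int ((2::int) ^ nat (b - a))" by simp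
  have "x * 2 powr real_of_int a = x * 2 powr real_of_int b / 2 ^ nat (b - a)"
    using assms by (simp add: powr_realpow[symmetric] powr_diff[symmetric] divide_simps powr_add[symmetric])
  then show ?thesis unfolding dyadic_index_def N
    by (subst ceiling_of_int_ceiling_divide) auto
qed

lemma dyadic_index_eq_coarsen:
  assumes "a \<le> b" "dyadic_index b x = dyadic_index b y"
  shows "dyadic_index a x = dyadic_index a y"
  using dyadic_index_coarsen[OF assms(1), of x] dyadic_index_coarsen[OF assms(1), of y] assms(2)
  by simp

lemma dyadic_index_halves:
  "dyadic_index j x = c \<longleftrightarrow> dyadic_index (j + 1) x = 2 * c - 1 \<or> dyadic_index (j + 1) x = 2 * c"
proof -
  have "dyadic_index j x = \<lceil>real_of_int (dyadic_index (j + 1) x) / 2\<rceil>"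
    using dyadic_index_coarsen[of j "j + 1" x] by simp
  then show ?thesis by (auto simp: ceiling_eq_iff)
qed

lemma dyadic_index_eq_iff:
  "dyadic_index m x = c \<longleftrightarrow>
     x \<in> {(real_of_int c - 1) * 2 powr (- real_of_int m) <.. real_of_int c * 2 powr (- real_of_int m)}"
proof -
  have "(2::real) powr real_of_int m > 0" by simp
  then show ?thesis unfolding dyadic_index_def
    by (simp add: ceiling_eq_iff powr_minus divide_simps mult.commute)
qed

lemma mem_dyadic_interval_iff: "x \<in> dyadic_interval j k \<longleftrightarrow> dyadic_index j x = int k + 1"
  unfolding dyadic_index_eq_iff dyadic_interval_def by (simp add: algebra_simps)

lemma ilen_dyadic_interval: "ilen (dyadic_interval j k) = 2 powr (- real_of_int j)"
  unfolding ilen_def dyadic_interval_def by (simp add: algebra_simps)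

lemma dyadic_index_pos: "x > 0 \<Longrightarrow> dyadic_index a x \<ge> 1"
  unfolding dyadic_index_def by (simp add: one_le_ceiling)

lemma dyadic_interval_pos: "x \<in> dyadic_interval j k \<Longrightarrow> x > 0"
  unfolding dyadic_interval_def by (auto intro: le_less_trans[rotated] zero_le_mult_iff)

lemma common_dyadic_interval_length:
  assumes "x > 0" "dyadic_index a x = dyadic_index a y"
  shows "2 powr (- real_of_int a) \<in> {ilen I | I. I \<in> dyadic_intervals \<and> x \<in> I \<and> y \<in> I}"
proof -
  define k where "k = nat (dyadic_index a x - 1)"
  have "x \<in> dyadic_interval a k" "y \<in> dyadic_interval a k"
    using dyadic_index_pos[OF assms(1), of a] assms(2) by (auto simp: mem_dyadic_interval_iff k_def)
  then show ?thesis
    unfolding dyadic_intervals_def by (auto simp: ilen_dyadic_interval intro!: exI[of _ "dyadic_interval a k"])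
qed

lemma dyadic_dist_le:
  assumes "x > 0" "dyadic_index a x = dyadic_index a y"
  shows "dyadic_dist x y \<le> 2 powr (- real_of_int a)"
  unfolding dyadic_dist_def using common_dyadic_interval_length[OF assms]
  by (intro cInf_lower) (auto intro!: bdd_belowI[of _ 0] simp: ilen_def)

lemma dyadic_dist_eq_last_common_level:
  assumes "x > 0" "dyadic_index a x = dyadic_index a y"
    and "dyadic_index (a + 1) x \<noteq> dyadic_index (a + 1) y"
  shows "dyadic_dist x y = 2 powr (- real_of_int a)"
  unfolding dyadic_dist_def
proof (rule cInf_eq_minimum)
  show "2 powr (- real_of_int a) \<in> {ilen I |I. I \<in> dyadic_intervals \<and> x \<in> I \<and> y \<in> I}"
    using assms(1,2) by (rule common_dyadic_interval_length)
next
  fix z assume "z \<in> {ilen I |I. I \<in> dyadic_intervals \<and> x \<in> I \<and> y \<in> I}"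
  then obtain b c where z: "z = ilen (dyadic_interval b c)"
    and "x \<in> dyadic_interval b c" "y \<in> dyadic_interval b c"
    unfolding dyadic_intervals_def by auto
  then have "dyadic_index b x = dyadic_index b y" by (simp add: mem_dyadic_interval_iff)
  then have "b \<le> a"
    using dyadic_index_eq_coarsen[of "a + 1" b x y] assms(3) by fastforce
  then show "2 powr (- real_of_int a) \<le> z" by (simp add: z ilen_dyadic_interval)
qed

lemma dyadic_dist_self:
  assumes "x > 0"
  shows "dyadic_dist x x = 0"
proof -
  have ge: "dyadic_dist x x \<ge> 0"
    unfolding dyadic_dist_def using common_dyadic_interval_length[OF assms, of 0 x]
    by (intro cInf_greatest) (auto simp: ilen_def)
  have le: "dyadic_dist x x \<le> (1/2) ^ n" for n :: nat
    using dyadic_dist_le[OF assms, of "int n" x]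
    by (simp add: powr_minus powr_realpow power_one_over inverse_eq_divide)
  show ?thesis
  proof (rule ccontr)
    assume "dyadic_dist x x \<noteq> 0"
    with ge obtain n where "(1/2::real) ^ n < dyadic_dist x x"
      using real_arch_pow_inv[of "dyadic_dist x x" "1/2"] by auto
    with le[of n] show False by simp
  qed
qed

lemma abs_diff_less_of_dyadic_index_eq:
  assumes "dyadic_index m x = dyadic_index m y"
  shows "\<bar>x - y\<bar> < 2 powr (- real_of_int m)"
  using dyadic_index_eq_iff[of m x "dyadic_index m x"] dyadic_index_eq_iff[of m y "dyadic_index m x"] assms
  by (auto simp: algebra_simps)

lemma dyadic_index_separates:
  assumes "x \<noteq> y"
  shows "\<exists>n::nat. dyadic_index (j + int n) x \<noteq> dyadic_index (j + int n) y"
proof -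
  have "\<bar>x - y\<bar> / 2 powr (- real_of_int j) > 0" using assms by simp
  then obtain n where "(1/2::real) ^ n < \<bar>x - y\<bar> / 2 powr (- real_of_int j)"
    using real_arch_pow_inv[of _ "1/2"] by auto
  then have "2 powr (- real_of_int j) * (1/2) ^ n < \<bar>x - y\<bar>" by (simp add: field_simps)
  also have "2 powr (- real_of_int j) * (1/2) ^ n = 2 powr (- real_of_int (j + int n))"
    by (simp add: powr_diff powr_realpow power_one_over)
  finally have "\<not> \<bar>x - y\<bar> < 2 powr (- real_of_int (j + int n))" by simp
  then show ?thesis using abs_diff_less_of_dyadic_index_eq by fastforce
qed

lemma last_common_dyadic_level:
  assumes "x \<noteq> y" "dyadic_index j x = dyadic_index j y"
  obtains n :: nat where "dyadic_index (j + int n) x = dyadic_index (j + int n) y"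
    "dyadic_index (j + int n + 1) x \<noteq> dyadic_index (j + int n + 1) y"
proof -
  have "\<exists>n::nat. dyadic_index (j + int n) x = dyadic_index (j + int n) y \<and>
      dyadic_index (j + int n + 1) x \<noteq> dyadic_index (j + int n + 1) y"
  proof (rule ccontr)
    assume "\<not> ?thesis"
    then have "dyadic_index (j + int n) x = dyadic_index (j + int n) y" for n
      by (induction n) (use assms(2) in \<open>auto simp: algebra_simps\<close>)
    then show False using dyadic_index_separates[OF assms(1)] by blast
  qed
  then show ?thesis using that by blast
qed

lemma haar_eq_dyadic_halves:
  "haar j k x =
    (if dyadic_index (j + 1) x = 2 * int k + 1 then 2 powr (real_of_int j / 2)
     else if dyadic_index (j + 1) x = 2 * int k + 2 then - (2 powr (real_of_int j / 2))
     else 0)"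
proof -
  have p: "(2::real) powr real_of_int (j + 1) = 2 * 2 powr real_of_int j" by (simp add: powr_add)
  have "2 powr real_of_int j * x - real k \<in> {0<..1/2} \<longleftrightarrow> dyadic_index (j + 1) x = 2 * int k + 1"
    unfolding dyadic_index_def p by (simp add: ceiling_eq_iff algebra_simps)
  moreover have "2 powr real_of_int j * x - real k \<in> {1/2<..1} \<longleftrightarrow> dyadic_index (j + 1) x = 2 * int k + 2"
    unfolding dyadic_index_def p by (simp add: ceiling_eq_iff algebra_simps) linarith
  ultimately show ?thesis
    unfolding haar_def haar_mother_def by (auto simp: indicator_def)
qed

lemma haar_eq_0: "x \<notin> dyadic_interval j k \<Longrightarrow> haar j k x = 0"
  using dyadic_index_halves[of j x "int k + 1"]
  by (auto simp: haar_eq_dyadic_halves mem_dyadic_interval_iff)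

lemma haar_squared: "(haar j k x)\<^sup>2 = 2 powr real_of_int j * indicator (dyadic_interval j k) x"
proof -
  have "(2 powr (real_of_int j / 2))\<^sup>2 = 2 powr real_of_int j"
    by (simp add: powr_realpow[symmetric] powr_powr)
  then show ?thesis
    using dyadic_index_halves[of j x "int k + 1"]
    by (auto simp: haar_eq_dyadic_halves indicator_def mem_dyadic_interval_iff)
qed

lemma measurable_dyadic_index [measurable]: "dyadic_index a \<in> borel \<rightarrow>\<^sub>M count_space UNIV"
  unfolding dyadic_index_def[abs_def] by measurable

lemma emeasure_dyadic_index_fiber:
  "emeasure lborel {y. dyadic_index m y = c} = ennreal (2 powr (- real_of_int m))"
proof -
  define t where "t = (2::real) powr (- real_of_int m)"
  have "t > 0" unfolding t_def by simp
  have "{y. dyadic_index m y = c} = {(real_of_int c - 1) * t <.. real_of_int c * t}"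
    unfolding t_def dyadic_index_eq_iff by blast
  also have "emeasure lborel \<dots> = ennreal (real_of_int c * t - (real_of_int c - 1) * t)"
    using \<open>t > 0\<close> by (intro emeasure_lborel_Ioc) (simp add: algebra_simps)
  also have "real_of_int c * t - (real_of_int c - 1) * t = t" by (simp add: algebra_simps)
  finally show ?thesis unfolding t_def .
qed

definition common_level_pairs :: "int \<Rightarrow> nat \<Rightarrow> nat \<Rightarrow> (real \<times> real) set" where
  "common_level_pairs j k n = {(x, y). x \<in> dyadic_interval j k \<and> y \<in> dyadic_interval j k \<and>
     dyadic_index (j + int n) x = dyadic_index (j + int n) y}"

text \<open>The pairs in I^j_k x I^j_k at dyadic distance 2^-(j+n).\<close>

definition last_common_level_pairs :: "int \<Rightarrow> nat \<Rightarrow> nat \<Rightarrow> (real \<times> real) set" where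
  "last_common_level_pairs j k n = common_level_pairs j k n - common_level_pairs j k (Suc n)"

lemma common_level_pairs_Suc_subset: "common_level_pairs j k (Suc n) \<subseteq> common_level_pairs j k n"
  unfolding common_level_pairs_def
  by (auto intro: dyadic_index_eq_coarsen[of "j + int n" "j + int (Suc n)"])

lemma common_level_pairs_sets [measurable]:
  "common_level_pairs j k n \<in> sets (borel \<Otimes>\<^sub>M borel)"
proof -
  have "common_level_pairs j k n = {p \<in> space (borel \<Otimes>\<^sub>M borel).
      dyadic_index j (fst p) = int k + 1 \<and> dyadic_index j (snd p) = int k + 1 \<and>
      dyadic_index (j + int n) (fst p) = dyadic_index (j + int n) (snd p)}"
    unfolding common_level_pairs_def mem_dyadic_interval_iff by (auto simp: space_pair_measure)
  also have "\<dots> \<in> sets (borel \<Otimes>\<^sub>M borel)" by measurable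
  finally show ?thesis .
qed

lemma last_common_level_pairs_sets [measurable]:
  "last_common_level_pairs j k n \<in> sets (borel \<Otimes>\<^sub>M borel)"
  unfolding last_common_level_pairs_def by measurable

lemma emeasure_common_level_pairs:
  "emeasure (lborel \<Otimes>\<^sub>M lborel) (common_level_pairs j k n) =
     ennreal (2 powr (- real_of_int (2 * j + int n)))"
proof -
  let ?m = "j + int n"
  have fiber: "Pair x -` common_level_pairs j k n =
      (if x \<in> dyadic_interval j k then {y. dyadic_index ?m y = dyadic_index ?m x} else {})" for x
  proof -
    have "y \<in> dyadic_interval j k"
      if "x \<in> dyadic_interval j k" "dyadic_index ?m y = dyadic_index ?m x" for y
      using that dyadic_index_eq_coarsen[of j ?m y x] by (simp add: mem_dyadic_interval_iff)
    then show ?thesis unfolding common_level_pairs_def by auto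
  qed
  have "emeasure (lborel \<Otimes>\<^sub>M lborel) (common_level_pairs j k n) =
      (\<integral>\<^sup>+x. emeasure lborel (Pair x -` common_level_pairs j k n) \<partial>lborel)"
    using common_level_pairs_sets sets_pair_measure_cong[OF sets_lborel sets_lborel]
    by (intro lborel.emeasure_pair_measure_alt) simp
  also have "\<dots> = (\<integral>\<^sup>+x. ennreal (2 powr (- real_of_int ?m)) * indicator (dyadic_interval j k) x \<partial>lborel)"
    by (rule nn_integral_cong) (simp add: fiber emeasure_dyadic_index_fiber)
  also have "\<dots> = ennreal (2 powr (- real_of_int ?m)) * emeasure lborel (dyadic_interval j k)"
    by (rule nn_integral_cmult_indicator) (simp add: dyadic_interval_def)
  also have "emeasure lborel (dyadic_interval j k) = ennreal (2 powr (- real_of_int j))"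
    by (simp add: dyadic_interval_def algebra_simps)
  also have "ennreal (2 powr (- real_of_int ?m)) * ennreal (2 powr (- real_of_int j)) =
      ennreal (2 powr (- real_of_int (2 * j + int n)))"
    by (simp add: ennreal_mult''[symmetric] powr_add[symmetric])
  finally show ?thesis .
qed

lemma measure_last_common_level_pairs:
  "measure (lborel \<Otimes>\<^sub>M lborel) (last_common_level_pairs j k n) =
     2 powr (- real_of_int (2 * j + int n + 1))"
proof -
  have m: "measure (lborel \<Otimes>\<^sub>M lborel) (common_level_pairs j k n) =
      2 powr (- real_of_int (2 * j + int n))" for n
    using emeasure_common_level_pairs[of j k n] by (simp add: measure_def)
  have "measure (lborel \<Otimes>\<^sub>M lborel) (last_common_level_pairs j k n) =
      measure (lborel \<Otimes>\<^sub>M lborel) (common_level_pairs j k n) -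
      measure (lborel \<Otimes>\<^sub>M lborel) (common_level_pairs j k (Suc n))"
    unfolding last_common_level_pairs_def
    by (rule measure_Diff) (auto simp: emeasure_common_level_pairs common_level_pairs_Suc_subset)
  also have "\<dots> = 2 powr (- real_of_int (2 * j + int n)) - 2 powr (- real_of_int (2 * j + int n) - 1)"
    unfolding m by (intro arg_cong2[where f = minus] arg_cong[where f = "(powr) 2"]) simp_all
  also have "\<dots> = 2 powr (- real_of_int (2 * j + int n) - 1)"
    by (simp add: powr_diff)
  also have "\<dots> = 2 powr (- real_of_int (2 * j + int n + 1))"
    by (rule arg_cong[where f = "(powr) 2"]) simp
  finally show ?thesis .
qed

lemma mem_last_common_level_pairs_iff:
  "(x, y) \<in> last_common_level_pairs j k n \<longleftrightarrow>
     x \<in> dyadic_interval j k \<and> y \<in> dyadic_interval j k \<and>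
     dyadic_index (j + int n) x = dyadic_index (j + int n) y \<and>
     dyadic_index (j + int n + 1) x \<noteq> dyadic_index (j + int n + 1) y"
  unfolding last_common_level_pairs_def common_level_pairs_def by (auto simp: algebra_simps)

lemma last_common_level_pairs_unique:
  assumes "p \<in> last_common_level_pairs j k n" "p \<in> last_common_level_pairs j k m"
  shows "n = m"
proof -
  obtain x y where p: "p = (x, y)" by (cases p)
  have ordered: False if "p \<in> last_common_level_pairs j k a" "p \<in> last_common_level_pairs j k b" "a < b" for a b
  proof -
    have "dyadic_index (j + int b) x = dyadic_index (j + int b) y"
      using that(2) unfolding p mem_last_common_level_pairs_iff by blast
    then have "dyadic_index (j + int a + 1) x = dyadic_index (j + int a + 1) y"
      by (rule dyadic_index_eq_coarsen[rotated]) (use \<open>a < b\<close> in simp)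
    then show False
      using that(1) unfolding p mem_last_common_level_pairs_iff by blast
  qed
  show "n = m"
  proof (rule ccontr)
    assume "n \<noteq> m"
    then consider "n < m" | "m < n" by linarith
    then show False using ordered[OF assms] ordered[OF assms(2,1)] by cases
  qed
qed

lemma haar_product_on_last_common_level:
  assumes "(x, y) \<in> last_common_level_pairs j k n"
  shows "haar j k x * haar j k y = (if n = 0 then - (2 powr real_of_int j) else 2 powr real_of_int j)"
proof (cases "n = 0")
  case True
  have "x \<in> dyadic_interval j k" "y \<in> dyadic_interval j k"
    "dyadic_index (j + 1) x \<noteq> dyadic_index (j + 1) y"
    using assms True unfolding mem_last_common_level_pairs_iff by auto
  then consider
      "dyadic_index (j + 1) x = 2 * int k + 1" "dyadic_index (j + 1) y = 2 * int k + 2"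
    | "dyadic_index (j + 1) x = 2 * int k + 2" "dyadic_index (j + 1) y = 2 * int k + 1"
    using dyadic_index_halves[of j x "int k + 1"] dyadic_index_halves[of j y "int k + 1"]
    unfolding mem_dyadic_interval_iff by fastforce
  moreover have "2 powr (real_of_int j / 2) * 2 powr (real_of_int j / 2) = (2::real) powr real_of_int j"
    by (simp add: powr_add[symmetric])
  ultimately show ?thesis
    using True by cases (simp_all add: haar_eq_dyadic_halves)
next
  case False
  have "dyadic_index (j + int n) x = dyadic_index (j + int n) y" "x \<in> dyadic_interval j k"
    using assms unfolding mem_last_common_level_pairs_iff by auto
  then have "dyadic_index (j + 1) x = dyadic_index (j + 1) y"
    using False dyadic_index_eq_coarsen[of "j + 1" "j + int n" x y] by simp
  then have "haar j k y = haar j k x" by (simp add: haar_eq_dyadic_halves)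
  then show ?thesis
    using False haar_squared[of j k x] \<open>x \<in> dyadic_interval j k\<close> by (simp add: power2_eq_square)
qed

definition position_integrand :: "real \<Rightarrow> (real \<Rightarrow> real) \<Rightarrow> real \<times> real \<Rightarrow> real" where
  "position_integrand s \<phi> = (\<lambda>(x, y). indicator ({0<..} \<times> {0<..}) (x, y) *
     (dyadic_dist x y powr (2 * s) * \<phi> x * \<phi> y / dyadic_dist x y))"

definition haar_level_value :: "real \<Rightarrow> int \<Rightarrow> nat \<Rightarrow> real" where
  "haar_level_value s j n = (if n = 0 then -1 else 1) *
     ((2 powr (- real_of_int (j + int n))) powr (2 * s) * 2 powr real_of_int j /
       2 powr (- real_of_int (j + int n)))"

lemma position_integrand_haar_on_level:
  assumes "(x, y) \<in> last_common_level_pairs j k n"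
  shows "position_integrand s (haar j k) (x, y) = haar_level_value s j n"
proof -
  have "x > 0" "y > 0"
    using assms dyadic_interval_pos unfolding mem_last_common_level_pairs_iff by auto
  moreover have "dyadic_dist x y = 2 powr (- real_of_int (j + int n))"
    using assms \<open>x > 0\<close> unfolding mem_last_common_level_pairs_iff
    by (intro dyadic_dist_eq_last_common_level) auto
  ultimately show ?thesis
    using haar_product_on_last_common_level[OF assms]
    by (simp add: position_integrand_def haar_level_value_def mult.assoc)
qed

text \<open>On the diagonal the dyadic distance is 0, and 0 powr _ = 0 kills the integrand.\<close>

lemma position_integrand_haar_off_levels:
  assumes "\<And>n. (x, y) \<notin> last_common_level_pairs j k n"
  shows "position_integrand s (haar j k) (x, y) = 0"
proof (cases "x \<in> dyadic_interval j k \<and> y \<in> dyadic_interval j k")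
  case False
  then show ?thesis by (auto simp: position_integrand_def haar_eq_0)
next
  case True
  have "x = y"
  proof (rule ccontr)
    assume "x \<noteq> y"
    moreover have "dyadic_index j x = dyadic_index j y"
      using True by (simp add: mem_dyadic_interval_iff)
    ultimately obtain n where "dyadic_index (j + int n) x = dyadic_index (j + int n) y"
      "dyadic_index (j + int n + 1) x \<noteq> dyadic_index (j + int n + 1) y"
      by (rule last_common_dyadic_level)
    then show False using assms[of n] True by (simp add: mem_last_common_level_pairs_iff)
  qed
  then show ?thesis
    using dyadic_dist_self[OF dyadic_interval_pos] True by (simp add: position_integrand_def)
qed

lemma position_integrand_haar_eq_suminf:
  "position_integrand s (haar j k) (x, y) =
     (\<Sum>n. haar_level_value s j n * indicator (last_common_level_pairs j k n) (x, y))"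
proof (cases "\<exists>n. (x, y) \<in> last_common_level_pairs j k n")
  case True
  then obtain n where n: "(x, y) \<in> last_common_level_pairs j k n" by blast
  have "haar_level_value s j m * indicator (last_common_level_pairs j k m) (x, y) =
      (if m = n then haar_level_value s j n else 0)" for m
    using last_common_level_pairs_unique[OF n, of m] n by (cases "m = n") (auto simp: indicator_def)
  then have "(\<lambda>m. haar_level_value s j m * indicator (last_common_level_pairs j k m) (x, y))
      sums haar_level_value s j n"
    using sums_single[of n "\<lambda>_. haar_level_value s j n"] by simp
  then show ?thesis
    using position_integrand_haar_on_level[OF n] by (simp add: sums_iff)
next
  case False
  then show ?thesis
    using position_integrand_haar_off_levels[of x y] by simp
qed

lemma haar_level_value_times_measure:
  "haar_level_value s j n * measure (lborel \<Otimes>\<^sub>M lborel) (last_common_level_pairs j k n) =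
     (if n = 0 then -1 else 1) * (2 powr (- 2 * s * real_of_int j - 1) * (2 powr (- 2 * s)) ^ n)"
proof -
  have "(2 powr (- real_of_int (j + int n))) powr (2 * s) * 2 powr real_of_int j /
        2 powr (- real_of_int (j + int n)) * 2 powr (- real_of_int (2 * j + int n + 1)) =
      2 powr (- real_of_int (j + int n) * (2 * s)) * 2 powr real_of_int j *
        2 powr real_of_int (j + int n) * 2 powr (- real_of_int (2 * j + int n + 1))"
    by (simp add: powr_powr divide_inverse ac_simps flip: powr_minus)
  also have "\<dots> = (2::real) powr (- real_of_int (j + int n) * (2 * s) + real_of_int j +
        real_of_int (j + int n) + - real_of_int (2 * j + int n + 1))"
    by (simp only: powr_add)
  also have "\<dots> = 2 powr (- 2 * s * real_of_int j - 1 + real n * (- 2 * s))"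
    by (rule arg_cong[where f = "(powr) 2"]) (simp add: algebra_simps)
  also have "\<dots> = 2 powr (- 2 * s * real_of_int j - 1) * 2 powr (real n * (- 2 * s))"
    by (rule powr_add)
  also have "2 powr (real n * (- 2 * s)) = (2 powr (- 2 * s) :: real) ^ n"
    by (rule powr_power[symmetric]) simp
  finally show ?thesis
    unfolding haar_level_value_def measure_last_common_level_pairs by (simp only: mult.assoc)
qed

lemma emeasure_last_common_level_pairs_finite:
  "emeasure (lborel \<Otimes>\<^sub>M lborel) (last_common_level_pairs j k n) < \<infinity>"
proof -
  have "emeasure (lborel \<Otimes>\<^sub>M lborel) (last_common_level_pairs j k n) \<le>
      emeasure (lborel \<Otimes>\<^sub>M lborel) (common_level_pairs j k n)"
    by (rule emeasure_mono) (auto simp: last_common_level_pairs_def)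
  then show ?thesis by (simp add: emeasure_common_level_pairs le_less_trans)
qed

lemma summable_norm_haar_level_terms:
  "summable (\<lambda>n. norm (haar_level_value s j n * indicator (last_common_level_pairs j k n) p))"
proof (cases "\<exists>n. p \<in> last_common_level_pairs j k n")
  case True
  then obtain n where n: "p \<in> last_common_level_pairs j k n" by blast
  show ?thesis
    by (intro summable_finite[of "{n}"])
      (auto simp: indicator_def dest: last_common_level_pairs_unique[OF n])
next
  case False
  then show ?thesis by simp
qed

lemma integral_norm_haar_level_term:
  "integral\<^sup>L (lborel \<Otimes>\<^sub>M lborel)
      (\<lambda>p. norm (haar_level_value s j n * indicator (last_common_level_pairs j k n) p)) =
     2 powr (- 2 * s * real_of_int j - 1) * (2 powr (- 2 * s)) ^ n"
proof -
  have "integral\<^sup>L (lborel \<Otimes>\<^sub>M lborel)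
      (\<lambda>p. norm (haar_level_value s j n * indicator (last_common_level_pairs j k n) p)) =
      \<bar>haar_level_value s j n * measure (lborel \<Otimes>\<^sub>M lborel) (last_common_level_pairs j k n)\<bar>"
    using emeasure_last_common_level_pairs_finite[of j k n] by (simp add: abs_mult)
  then show ?thesis by (simp add: haar_level_value_times_measure abs_mult)
qed

lemma haar_level_values_sums_Qdelta:
  assumes "0 < s"
  shows "(\<lambda>n. haar_level_value s j n * measure (lborel \<Otimes>\<^sub>M lborel) (last_common_level_pairs j k n))
           sums Qdelta s (haar j k)"
proof -
  let ?M = "lborel \<Otimes>\<^sub>M lborel"
  define f where "f n p = haar_level_value s j n * indicator (last_common_level_pairs j k n) p" for n p
  have integrable: "integrable ?M (f n)" for n
    unfolding f_def using emeasure_last_common_level_pairs_finite[of j k n]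
    by (intro integrable_mult_right integrable_real_indicator) auto
  have integral: "integral\<^sup>L ?M (f n) = haar_level_value s j n * measure ?M (last_common_level_pairs j k n)" for n
    unfolding f_def using emeasure_last_common_level_pairs_finite[of j k n] by simp
  have "(2::real) powr (- 2 * s) < 1"
    using assms powr_less_mono[of "- 2 * s" 0 2] by simp
  then have "summable (\<lambda>n. integral\<^sup>L ?M (\<lambda>p. norm (f n p)))"
    unfolding f_def integral_norm_haar_level_term by (simp add: summable_geometric)
  moreover have "AE p in ?M. summable (\<lambda>n. norm (f n p))"
    unfolding f_def using summable_norm_haar_level_terms by simp
  ultimately have "(\<lambda>n. integral\<^sup>L ?M (f n)) sums integral\<^sup>L ?M (\<lambda>p. \<Sum>n. f n p)"
    by (intro sums_integral integrable)
  also have "(\<lambda>p. \<Sum>n. f n p) = position_integrand s (haar j k)"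
    using position_integrand_haar_eq_suminf[of s j k] by (auto simp: f_def)
  also have "integral\<^sup>L ?M (position_integrand s (haar j k)) = Qdelta s (haar j k)"
    unfolding Qdelta_def position_integrand_def by (rule refl)
  finally show ?thesis unfolding integral .
qed

lemma sums_geometric_negated_head:
  fixes A r :: real
  assumes "\<bar>r\<bar> < 1"
  shows "(\<lambda>n. if n = 0 then - A else A * r ^ n) sums (A / (1 - r) - 2 * A)"
proof -
  have "(\<lambda>n. A * r ^ n - (if n = 0 then 2 * A else 0)) sums (A / (1 - r) - 2 * A)"
    using sums_diff[OF sums_mult[OF geometric_sums, of r A] sums_single[of 0 "\<lambda>_. 2 * A"]] assms
    by simp
  moreover have "(\<lambda>n. A * r ^ n - (if n = 0 then 2 * A else 0)) = (\<lambda>n. if n = 0 then - A else A * r ^ n)"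
    by (rule ext) simp
  ultimately show ?thesis by simp
qed

lemma gamma1_eq: "gamma1 s = 1/2 * ((2 * 2 powr (- 2 * s) - 1) / (1 - 2 powr (- 2 * s)))"
  unfolding gamma1_def by (simp add: powr_diff powr_minus field_simps)

lemma Qdelta_haar:
  assumes "0 < s"
  shows "Qdelta s (haar j k) = gamma1 s * ilen (dyadic_interval j k) powr (2 * s)"
proof -
  define A where "A = (2::real) powr (- 2 * s * real_of_int j - 1)"
  define r where "r = (2::real) powr (- 2 * s)"
  have "0 < r" "r < 1" unfolding r_def using assms powr_less_mono[of "- 2 * s" 0 2] by simp_all
  have "(\<lambda>n. haar_level_value s j n * measure (lborel \<Otimes>\<^sub>M lborel) (last_common_level_pairs j k n)) =
      (\<lambda>n. if n = 0 then - A else A * r ^ n)"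
    by (rule ext) (simp add: haar_level_value_times_measure A_def r_def)
  then have "(\<lambda>n. if n = 0 then - A else A * r ^ n) sums Qdelta s (haar j k)"
    using haar_level_values_sums_Qdelta[OF assms, of j k] by simp
  moreover have "(\<lambda>n. if n = 0 then - A else A * r ^ n) sums (A / (1 - r) - 2 * A)"
    using \<open>0 < r\<close> \<open>r < 1\<close> by (intro sums_geometric_negated_head) simp
  ultimately have "Qdelta s (haar j k) = A / (1 - r) - 2 * A"
    by (rule sums_unique2)
  also have "ilen (dyadic_interval j k) powr (2 * s) = 2 * A"
    unfolding ilen_dyadic_interval A_def by (simp add: powr_powr powr_diff mult.commute)
  then have "A / (1 - r) - 2 * A = gamma1 s * ilen (dyadic_interval j k) powr (2 * s)"
    unfolding gamma1_eq r_def[symmetric] using \<open>r < 1\<close> by (simp add: field_simps)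
  finally show ?thesis .
qed

lemma integral_Ioc_power2_diff:
  fixes p q a :: real
  assumes "p \<le> q"
  shows "integral\<^sup>L lborel (\<lambda>x. indicator {p<..q} x * (x - a)\<^sup>2) = ((q - a) ^ 3 - (p - a) ^ 3) / 3"
proof -
  have "integral\<^sup>L lborel (\<lambda>x. indicator {p<..q} x * (x - a)\<^sup>2) =
        integral\<^sup>L lborel (\<lambda>x. indicator {p..q} x *\<^sub>R (x - a)\<^sup>2)"
    using AE_lborel_singleton[of p]
    by (intro integral_cong_AE) (auto elim!: eventually_mono simp: indicator_def)
  also have "\<dots> = (q - a) ^ 3 / 3 - (p - a) ^ 3 / 3"
    by (rule integral_FTC_atLeastAtMost[OF assms])
       (auto intro!: derivative_eq_intros continuous_intros
         simp flip: has_real_derivative_iff_has_vector_derivative simp: power2_eq_square)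
  finally show ?thesis by (simp add: diff_divide_distrib)
qed

lemma haar_second_moment:
  "integral\<^sup>L lborel (\<lambda>x. (x - a)\<^sup>2 * \<bar>haar j k x\<bar>\<^sup>2) =
     (a - (real k + 1/2) * 2 powr (- real_of_int j))\<^sup>2 + (2 powr (- real_of_int j))\<^sup>2 / 12"
proof -
  define l where "l = (2::real) powr (- real_of_int j)"
  define p where "p = real k * l"
  have "l > 0" unfolding l_def by simp
  have lj: "2 powr real_of_int j * l = 1" unfolding l_def by (simp add: powr_minus)
  have I: "dyadic_interval j k = {p<..p + l}"
    unfolding dyadic_interval_def p_def l_def by (simp add: algebra_simps)
  have "integral\<^sup>L lborel (\<lambda>x. (x - a)\<^sup>2 * \<bar>haar j k x\<bar>\<^sup>2) =
      2 powr real_of_int j * integral\<^sup>L lborel (\<lambda>x. indicator {p<..p + l} x * (x - a)\<^sup>2)"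
    by (simp add: haar_squared I mult.commute mult.left_commute)
  also have "\<dots> = 2 powr real_of_int j * (((p + l - a) ^ 3 - (p - a) ^ 3) / 3)"
    using integral_Ioc_power2_diff[of p "p + l" a] \<open>l > 0\<close> by simp
  also have "\<dots> = 2 powr real_of_int j * l * ((a - (p + l / 2))\<^sup>2 + l\<^sup>2 / 12)"
    by (simp add: field_simps power2_eq_square power3_eq_cube)
  also have "\<dots> = (a - (real k + 1/2) * l)\<^sup>2 + l\<^sup>2 / 12"
    unfolding lj by (simp add: p_def algebra_simps)
  finally show ?thesis
    unfolding l_def .
qed

lemma Var_haar_squared: "Var (\<lambda>x. \<bar>haar j k x\<bar>\<^sup>2) = 1/12 * (ilen (dyadic_interval j k))\<^sup>2"
proof -
  have "Var (\<lambda>x. \<bar>haar j k x\<bar>\<^sup>2) =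
      (INF a. (a - (real k + 1/2) * 2 powr (- real_of_int j))\<^sup>2 + (2 powr (- real_of_int j))\<^sup>2 / 12)"
    unfolding Var_def haar_second_moment by (rule refl)
  also have "\<dots> = (2 powr (- real_of_int j))\<^sup>2 / 12"
    by (rule cInf_eq_minimum) auto
  finally show ?thesis by (simp add: ilen_dyadic_interval)
qed

theorem lemma2p3:
  fixes s :: real and j :: int and k :: nat
  assumes "0 < s" and "s < 1/2"
  shows "Var (\<lambda>x. \<bar>haar j k x\<bar>\<^sup>2) = 1/12 * (ilen (dyadic_interval j k))\<^sup>2 \<and>
         Qdelta s (haar j k) = gamma1 s * ilen (dyadic_interval j k) powr (2 * s)"
  using Var_haar_squared Qdelta_haar[OF assms(1)] by blast

end
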